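(* Let $(T,h)$ be a monotonicity preserving transformation and let $c: I\times J\to\mathbb{R}$ be a cost function. Define a new cost function $c'(x',y') := \frac{c(T^{-1}(x',y'))}{h(T^{-1}(x',y'))}$ on $I'\times J'$. If $\Xi\subset I\times J$ is $c$-monotone, then $\Xi' := T(\Xi)$ is $c'$-monotone.
   Context: Let $I,J,I',J'$ be intervals in $\mathbb{R}$ and let $\mathcal{E}(X)$ denote the finite measures on a space $X$. Two finite measures $\alpha,\beta$ on $\mathbb{R}^2$ are called competitors if they have the same marginals $\alpha_0,\alpha_1$ and, for any disintegrations $(\alpha_x)_x$, $(\beta_x)_x$ with respect to the first marginal $\alpha_0$, for $\alpha_0$-a.e. $x$ one has $\int y\,\alpha_x(dy)=\int y\,\beta_x(dy)$. A set $\Xi\subset\mathbb{R}^2$ is $c$-monotone if for every finite measure $\alpha$ concentrated on $\Xi$ with finite support and every competitor $\beta$ of $\alpha$ one has $\int c\,d\alpha\le\int c\,d\beta$. A bijective map $\tau:\mathcal{E}(I\times J)\to\mathcal{E}(I'\times J')$ is competitor preserving if whenever $\alpha',\beta'$ are competitors concentrated on $I'\times J'$, then $\tau^{-1}(\alpha')$ and $\tau^{-1}(\beta')$ are also competitors. Given a bijective map $T:I\times J\to I'\times J'$ and $h:I\times J\to(0,\infty)$, the pair $(T,h)$ is called a monotonicity preserving transformation if the induced map $\tau$ defined by $\int g\,d\tau(\alpha)=\int (g\circ T)\,h\,d\alpha$ for all bounded continuous $g$ is competitor preserving. *)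

theory Defs
  imports "HOL-Probability.Probability"
begin

definition fin_measures :: "(real \<times> real) set \<Rightarrow> (real \<times> real) measure set" where
  "fin_measures X = {M. sets M = sets borel \<and> finite_measure M \<and> emeasure M (UNIV - X) = 0}"

definition marg0 :: "(real \<times> real) measure \<Rightarrow> real measure" where
  "marg0 M = distr M borel fst"

definition marg1 :: "(real \<times> real) measure \<Rightarrow> real measure" where
  "marg1 M = distr M borel snd"

definition disintegration :: "(real \<times> real) measure \<Rightarrow> (real \<Rightarrow> real measure) \<Rightarrow> bool" where
  "disintegration M K \<longleftrightarrow>
     K \<in> marg0 M \<rightarrow>\<^sub>M prob_algebra borel \<and>
     (\<forall>A \<in> sets borel. emeasure M A = (\<integral>\<^sup>+ x. emeasure (K x) (Pair x -` A) \<partial>marg0 M))"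

definition competitors :: "(real \<times> real) measure \<Rightarrow> (real \<times> real) measure \<Rightarrow> bool" where
  "competitors \<alpha> \<beta> \<longleftrightarrow>
     sets \<alpha> = sets borel \<and> sets \<beta> = sets borel \<and> finite_measure \<alpha> \<and> finite_measure \<beta> \<and>
     marg0 \<alpha> = marg0 \<beta> \<and> marg1 \<alpha> = marg1 \<beta> \<and>
     (\<forall>K\<alpha> K\<beta>. disintegration \<alpha> K\<alpha> \<longrightarrow> disintegration \<beta> K\<beta> \<longrightarrow>
        (AE x in marg0 \<alpha>. (\<integral>y. y \<partial>K\<alpha> x) = (\<integral>y. y \<partial>K\<beta> x)))"

text \<open>Integral of c against a finitely supported measure (sum over its atoms).\<close>
definition fs_integral :: "(real \<times> real) measure \<Rightarrow> (real \<times> real \<Rightarrow> real) \<Rightarrow> real" where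
  "fs_integral M c = (\<Sum>p \<in> {p. emeasure M {p} \<noteq> 0}. c p * measure M {p})"

definition c_monotone :: "(real \<times> real \<Rightarrow> real) \<Rightarrow> (real \<times> real) set \<Rightarrow> bool" where
  "c_monotone c \<Xi> \<longleftrightarrow>
     (\<forall>\<alpha> \<beta>. sets \<alpha> = sets borel \<and> finite_measure \<alpha> \<and>
        (\<exists>S. finite S \<and> S \<subseteq> \<Xi> \<and> emeasure \<alpha> (UNIV - S) = 0) \<and>
        competitors \<alpha> \<beta> \<longrightarrow> fs_integral \<alpha> c \<le> fs_integral \<beta> c)"

definition competitor_preserving ::
  "((real \<times> real) measure \<Rightarrow> (real \<times> real) measure) \<Rightarrow> (real \<times> real) set \<Rightarrow> (real \<times> real) set \<Rightarrow> bool" where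
  "competitor_preserving \<tau> X X' \<longleftrightarrow>
     bij_betw \<tau> (fin_measures X) (fin_measures X') \<and>
     (\<forall>\<alpha>' \<in> fin_measures X'. \<forall>\<beta>' \<in> fin_measures X'. competitors \<alpha>' \<beta>' \<longrightarrow>
        competitors (the_inv_into (fin_measures X) \<tau> \<alpha>') (the_inv_into (fin_measures X) \<tau> \<beta>'))"

definition monotonicity_preserving ::
  "real set \<Rightarrow> real set \<Rightarrow> real set \<Rightarrow> real set \<Rightarrow> (real \<times> real \<Rightarrow> real \<times> real) \<Rightarrow> (real \<times> real \<Rightarrow> real) \<Rightarrow> bool" where
  "monotonicity_preserving I J I' J' T h \<longleftrightarrow>
     bij_betw T (I \<times> J) (I' \<times> J') \<and> (\<forall>p \<in> I \<times> J. 0 < h p) \<and>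
     (\<exists>\<tau>. bij_betw \<tau> (fin_measures (I \<times> J)) (fin_measures (I' \<times> J')) \<and>
        (\<forall>\<alpha> \<in> fin_measures (I \<times> J). \<forall>g :: real \<times> real \<Rightarrow> real.
            continuous_on UNIV g \<and> bounded (range g) \<longrightarrow>
            (\<integral>p. g p \<partial>\<tau> \<alpha>) = (\<integral>p. g (T p) * h p \<partial>\<alpha>)) \<and>
        competitor_preserving \<tau> (I \<times> J) (I' \<times> J'))"

end

theory Submission
  imports Defs
begin

text \<open>Testing \<open>\<integral>g d(\<tau> \<alpha>) = \<integral>(g \<circ> T) h d\<alpha>\<close> against bounded continuous functions that vanish
  exactly on a finite set, or that single out one of its points, shows: if \<open>\<tau> \<alpha>\<close> has finitely
  many atoms \<open>q\<close>, then \<open>\<alpha>\<close> has exactly the atoms \<open>T\<^sup>-\<^sup>1 q\<close>, with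
  \<open>\<alpha>{T\<^sup>-\<^sup>1 q} h(T\<^sup>-\<^sup>1 q) = (\<tau> \<alpha>){q}\<close>; hence the \<open>c'\<close>-cost of \<open>\<tau> \<alpha>\<close> is the \<open>c\<close>-cost of \<open>\<alpha>\<close>.
  A competitor of a finitely supported measure has the same marginals, so it is finitely
  supported as well, on the product of the projections of the support. Thus a competing pair
  \<open>\<alpha>', \<beta>'\<close> with \<open>\<alpha>'\<close> finitely supported in \<open>T \<Xi>\<close> pulls back under \<open>\<tau>\<close> to a competing pair with
  the same costs whose first member is finitely supported in \<open>\<Xi>\<close>, and \<open>c\<close>-monotonicity of \<open>\<Xi>\<close>
  applies.\<close>

lemma space_eq_UNIV_if_sets_borel:
  "sets M = sets (borel :: 'a::topological_space measure) \<Longrightarrow> space M = UNIV"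
  by (metis sets_eq_imp_space_eq space_borel)

lemma finite_borel [measurable]: "finite S \<Longrightarrow> S \<in> sets (borel :: 'a::t1_space measure)"
  by (simp add: borel_closed finite_imp_closed)

lemma emeasure_Compl_eq_0_iff_AE:
  fixes M :: "'a::topological_space measure"
  assumes "sets M = sets borel" "S \<in> sets borel"
  shows "emeasure M (UNIV - S) = 0 \<longleftrightarrow> (AE x in M. x \<in> S)"
  using assms AE_iff_measurable[of "UNIV - S" M "\<lambda>x. x \<in> S"]
  by (auto simp: space_eq_UNIV_if_sets_borel)

lemma integral_finite_support:
  fixes M :: "'a::t1_space measure" and f :: "'a \<Rightarrow> real"
  assumes M: "sets M = sets borel" "finite_measure M"
    and S: "finite S" "AE x in M. x \<in> S"
    and f: "f \<in> borel_measurable borel"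
  shows "(\<integral>x. f x \<partial>M) = (\<Sum>s\<in>S. f s * measure M {s})"
proof -
  interpret finite_measure M by fact
  have [measurable]: "f \<in> borel_measurable M"
    using f by (simp add: measurable_cong_sets[OF M(1) refl])
  have [measurable]: "S \<in> sets M"
    using M(1) S(1) by simp
  have "(\<integral>x. f x \<partial>M) = (\<integral>x. f x * indicator S x \<partial>M)"
    using S(2) by (intro integral_cong_AE) auto
  also have "\<dots> = (\<Sum>s\<in>S. f s * measure M {s})"
    using S(1) M(1) by (intro integral_indicator_finite_real) (auto simp: less_top[symmetric])
  finally show ?thesis .
qed

lemma fs_integral_eq_sum:
  assumes "sets M = sets borel" "finite S" "emeasure M (UNIV - S) = 0"
  shows "fs_integral M c = (\<Sum>s\<in>S. c s * measure M {s})"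
  unfolding fs_integral_def
proof (rule sum.mono_neutral_left)
  show "{p. emeasure M {p} \<noteq> 0} \<subseteq> S"
    using assms emeasure_mono[of "{_}" "UNIV - S" M] by fastforce
qed (auto simp: assms measure_def)

lemma null_measure_if_measure_space_eq_0:
  assumes "sets M = sets borel" "finite_measure M" "measure M (space M) = 0"
  shows "M = null_measure borel"
proof (rule measure_eqI)
  fix A assume "A \<in> sets M"
  then have "emeasure M A \<le> emeasure M (space M)"
    by (intro emeasure_mono) (auto dest: sets.sets_into_space)
  then show "emeasure M A = emeasure (null_measure borel) A"
    using assms by (simp add: finite_measure.emeasure_eq_measure)
qed (use assms in auto)

lemma bounded_continuous_separating_function:
  fixes S T :: "'a::euclidean_space set"
  assumes "closed S" "closed T" "S \<inter> T = {}"
  obtains g :: "'a \<Rightarrow> real"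
  where "continuous_on UNIV g" "bounded (range g)" "\<And>x. 0 \<le> g x"
    "\<And>x. g x = 0 \<longleftrightarrow> x \<in> S" "\<And>x. x \<in> T \<Longrightarrow> g x = 1"
proof -
  obtain g :: "'a \<Rightarrow> real" where g: "continuous_on UNIV g" "\<And>x. g x \<in> closed_segment 0 1"
    "\<And>x. g x = 0 \<longleftrightarrow> x \<in> S" "\<And>x. g x = 1 \<longleftrightarrow> x \<in> T"
    using Urysohn_strong[OF assms zero_neq_one] by blast
  then have "\<And>x. g x \<in> {0..1}"
    by (simp add: closed_segment_eq_real_ivl)
  then have "bounded (range g)" "\<And>x. 0 \<le> g x"
    by (auto simp: bounded_iff intro!: exI[of _ 1])
  with g that show thesis
    by blast
qed

lemma integrable_bounded_continuous:
  fixes g :: "'a::topological_space \<Rightarrow> real"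
  assumes "sets M = sets borel" "finite_measure M" "continuous_on UNIV g" "bounded (range g)"
  shows "integrable M g"
proof -
  obtain B where "\<And>x. norm (g x) \<le> B"
    using assms(4) by (auto simp: bounded_iff)
  moreover have "g \<in> borel_measurable M"
    using assms(3) by (simp add: measurable_cong_sets[OF assms(1) refl] borel_measurable_continuous_onI)
  ultimately show ?thesis
    using finite_measure.integrable_const_bound[OF assms(2)] by blast
qed

lemma integrable_transfer:
  fixes \<mu>' :: "'a::topological_space measure" and T :: "'b \<Rightarrow> 'a" and h g :: "_ \<Rightarrow> real"
  assumes \<mu>': "sets \<mu>' = sets borel" "finite_measure \<mu>'" "measure \<mu>' (space \<mu>') \<noteq> 0"
    and transfer: "\<And>g. continuous_on UNIV g \<Longrightarrow> bounded (range g) \<Longrightarrow>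
      (\<integral>p. g p \<partial>\<mu>') = (\<integral>p. g (T p) * h p \<partial>\<mu>)"
    and g: "continuous_on UNIV g" "bounded (range g)"
  shows "integrable \<mu> (\<lambda>p. g (T p) * h p)"
proof -
  have "(\<integral>p. h p \<partial>\<mu>) = measure \<mu>' (space \<mu>')"
    using transfer[of "\<lambda>_. 1"] by simp
  then have h: "integrable \<mu> h"
    using \<mu>'(3) not_integrable_integral_eq by fastforce
  have g1: "continuous_on UNIV (\<lambda>x. g x + 1)" "bounded (range (\<lambda>x. g x + 1))"
    using g by (auto intro!: continuous_intros bounded_plus_comp)
  have measurable: "(\<lambda>p. g (T p) * h p) \<in> borel_measurable \<mu>"
  proof (rule ccontr)
    assume *: "(\<lambda>p. g (T p) * h p) \<notin> borel_measurable \<mu>"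
    \<comment> \<open>Then the integrals of g and of g + 1 against \<mu>' would both be the junk value 0,
      although they differ by the nonzero total mass of \<mu>'.\<close>
    have "\<not> integrable \<mu> (\<lambda>p. (g (T p) + 1) * h p)"
    proof
      assume "integrable \<mu> (\<lambda>p. (g (T p) + 1) * h p)"
      then have "integrable \<mu> (\<lambda>p. (g (T p) + 1) * h p - h p)"
        using h by simp
      then have "integrable \<mu> (\<lambda>p. g (T p) * h p)"
        by (simp add: algebra_simps)
      with * show False
        using borel_measurable_integrable by blast
    qed
    moreover have "\<not> integrable \<mu> (\<lambda>p. g (T p) * h p)"
      using * borel_measurable_integrable by blast
    ultimately have "(\<integral>p. g p + 1 \<partial>\<mu>') = 0" "(\<integral>p. g p \<partial>\<mu>') = 0"
      using transfer[OF g1] transfer[OF g] by (simp_all add: not_integrable_integral_eq)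
    moreover have "(\<integral>p. g p + 1 \<partial>\<mu>') = (\<integral>p. g p \<partial>\<mu>') + measure \<mu>' (space \<mu>')"
      using integrable_bounded_continuous[OF \<mu>'(1,2) g] finite_measure.integrable_const[OF \<mu>'(2)]
      by (subst Bochner_Integration.integral_add) auto
    ultimately show False
      using \<mu>'(3) by simp
  qed
  obtain B where B: "\<And>x. norm (g x) \<le> B"
    using g(2) by (auto simp: bounded_iff)
  show ?thesis
  proof (rule Bochner_Integration.integrable_bound[OF _ measurable])
    show "integrable \<mu> (\<lambda>p. B * h p)"
      using h by simp
    show "AE x in \<mu>. norm (g (T x) * h x) \<le> norm (B * h x)"
      using B[of "T _"] order_trans[OF norm_ge_zero B]
      by (intro AE_I2) (auto simp: abs_mult intro: mult_right_mono)
  qed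
qed

lemma AE_transfer_in_finite_support:
  fixes \<mu>' :: "'a::euclidean_space measure" and T :: "'b \<Rightarrow> 'a" and h :: "'b \<Rightarrow> real"
  assumes \<mu>': "sets \<mu>' = sets borel" "finite_measure \<mu>'" "measure \<mu>' (space \<mu>') \<noteq> 0"
    and S': "finite S'" "AE q in \<mu>'. q \<in> S'"
    and h: "AE p in \<mu>. 0 < h p"
    and transfer: "\<And>g. continuous_on UNIV g \<Longrightarrow> bounded (range g) \<Longrightarrow>
      (\<integral>p. g p \<partial>\<mu>') = (\<integral>p. g (T p) * h p \<partial>\<mu>)"
  shows "AE p in \<mu>. T p \<in> S'"
proof -
  obtain g :: "'a \<Rightarrow> real" where g: "continuous_on UNIV g" "bounded (range g)" "\<And>x. 0 \<le> g x"
    "\<And>x. g x = 0 \<longleftrightarrow> x \<in> S'"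
    by (rule bounded_continuous_separating_function[of S' "{}"]) (auto simp: S'(1) finite_imp_closed)
  have "(\<integral>p. g (T p) * h p \<partial>\<mu>) = (\<Sum>s\<in>S'. g s * measure \<mu>' {s})"
    using transfer[OF g(1,2)] integral_finite_support[OF \<mu>'(1,2) S'] g(1)
    by (simp add: borel_measurable_continuous_onI)
  also have "\<dots> = 0"
    using g(4) by (intro sum.neutral) auto
  finally have "AE p in \<mu>. g (T p) * h p = 0"
    using integrable_transfer[OF \<mu>' transfer g(1,2)] h g(3)
    by (subst integral_nonneg_eq_0_iff_AE[symmetric]) (auto elim: AE_mp)
  with h show ?thesis
    by eventually_elim (use g(4) in auto)
qed

lemma measure_atom_transfer:
  fixes \<mu> :: "'b::t1_space measure" and \<mu>' :: "'a::euclidean_space measure"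
    and T :: "'b \<Rightarrow> 'a" and h :: "'b \<Rightarrow> real"
  assumes \<mu>: "sets \<mu> = sets borel" "finite_measure \<mu>" and P: "finite P" "AE p in \<mu>. p \<in> P"
    and \<mu>': "sets \<mu>' = sets borel" "finite_measure \<mu>'" "measure \<mu>' (space \<mu>') \<noteq> 0"
    and S': "finite S'" "AE q in \<mu>'. q \<in> S'"
    and T: "inj_on T P" "T ` P \<subseteq> S'"
    and transfer: "\<And>g. continuous_on UNIV g \<Longrightarrow> bounded (range g) \<Longrightarrow>
      (\<integral>p. g p \<partial>\<mu>') = (\<integral>p. g (T p) * h p \<partial>\<mu>)"
    and p: "p \<in> P"
  shows "measure \<mu> {p} * h p = measure \<mu>' {T p}"
proof -
  obtain g :: "'a \<Rightarrow> real" where g: "continuous_on UNIV g" "bounded (range g)"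
    "\<And>x. g x = 0 \<longleftrightarrow> x \<in> S' - {T p}" "g (T p) = 1"
    by (rule bounded_continuous_separating_function[of "S' - {T p}" "{T p}"])
      (auto simp: S'(1) finite_imp_closed)
  have gT: "(\<lambda>x. g (T x) * h x) \<in> borel_measurable borel"
    using borel_measurable_integrable[OF integrable_transfer[OF \<mu>' transfer g(1,2)]]
    by (simp add: measurable_cong_sets[OF \<mu>(1) refl])
  have "(\<integral>s. g s \<partial>\<mu>') = (\<Sum>s\<in>S'. g s * measure \<mu>' {s})"
    using integral_finite_support[OF \<mu>'(1,2) S' borel_measurable_continuous_onI[OF g(1)]] .
  also have "\<dots> = (\<Sum>s\<in>S'. if s = T p then measure \<mu>' {s} else 0)"
    by (rule sum.cong) (use g(3,4) in auto)
  also have "\<dots> = measure \<mu>' {T p}"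
    using S'(1) T(2) p by (auto simp: sum.delta')
  finally have lhs: "(\<integral>s. g s \<partial>\<mu>') = measure \<mu>' {T p}" .
  have "(\<integral>x. g (T x) * h x \<partial>\<mu>) = (\<Sum>x\<in>P. g (T x) * h x * measure \<mu> {x})"
    using integral_finite_support[OF \<mu> P gT] .
  also have "\<dots> = (\<Sum>x\<in>P. if x = p then h x * measure \<mu> {x} else 0)"
  proof (rule sum.cong)
    fix x assume "x \<in> P"
    then have "x \<noteq> p \<Longrightarrow> T x \<in> S' - {T p}"
      using T p by (auto simp: inj_on_eq_iff)
    then show "g (T x) * h x * measure \<mu> {x} = (if x = p then h x * measure \<mu> {x} else 0)"
      using g(3,4) by auto
  qed simp
  also have "\<dots> = h p * measure \<mu> {p}"
    using P(1) p by (simp add: sum.delta')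
  finally show ?thesis
    using lhs transfer[OF g(1,2)] by (simp add: mult.commute)
qed

lemma null_measure_in_fin_measures: "null_measure borel \<in> fin_measures X"
  by (auto simp: fin_measures_def intro: finite_measureI)

lemma fs_integral_reweight:
  fixes \<mu> \<mu>' :: "(real \<times> real) measure" and \<sigma> :: "real \<times> real \<Rightarrow> real \<times> real"
  assumes "sets \<mu> = sets borel" "sets \<mu>' = sets borel"
    and S': "finite S'" "inj_on \<sigma> S'"
    and "emeasure \<mu> (UNIV - \<sigma> ` S') = 0" "emeasure \<mu>' (UNIV - S') = 0"
    and atoms: "\<And>q. q \<in> S' \<Longrightarrow> measure \<mu> {\<sigma> q} * h (\<sigma> q) = measure \<mu>' {q}"
    and h: "\<And>q. q \<in> S' \<Longrightarrow> h (\<sigma> q) \<noteq> 0"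
  shows "fs_integral \<mu> c = fs_integral \<mu>' (\<lambda>q. c (\<sigma> q) / h (\<sigma> q))"
proof -
  have "fs_integral \<mu> c = (\<Sum>s\<in>\<sigma> ` S'. c s * measure \<mu> {s})"
    using assms by (intro fs_integral_eq_sum) auto
  also have "\<dots> = (\<Sum>q\<in>S'. c (\<sigma> q) * measure \<mu> {\<sigma> q})"
    using sum.reindex[OF S'(2)] by simp
  also have "\<dots> = (\<Sum>q\<in>S'. c (\<sigma> q) / h (\<sigma> q) * measure \<mu>' {q})"
    using atoms h by (intro sum.cong) (auto simp: field_simps)
  also have "\<dots> = fs_integral \<mu>' (\<lambda>q. c (\<sigma> q) / h (\<sigma> q))"
    using assms by (intro fs_integral_eq_sum[symmetric]) auto
  finally show ?thesis .
qed

lemma fin_measures_if_finite_support: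
  assumes "sets M = sets borel" "finite_measure M"
    and "finite S" "S \<subseteq> X" "emeasure M (UNIV - S) = 0"
  shows "M \<in> fin_measures X"
proof -
  have "emeasure M (UNIV - X) \<le> emeasure M (UNIV - S)"
    using assms by (intro emeasure_mono) auto
  then show ?thesis
    using assms by (simp add: fin_measures_def)
qed

lemma fs_integral_transfer:
  fixes T :: "real \<times> real \<Rightarrow> real \<times> real" and h c :: "real \<times> real \<Rightarrow> real"
  assumes T: "bij_betw T X X'" and h: "\<forall>p\<in>X. 0 < h p"
    and \<mu>: "sets \<mu> = sets borel" "finite_measure \<mu>" "AE p in \<mu>. p \<in> X"
    and \<mu>': "sets \<mu>' = sets borel" "finite_measure \<mu>'" "measure \<mu>' (space \<mu>') \<noteq> 0"
    and S': "finite S'" "S' \<subseteq> X'" "emeasure \<mu>' (UNIV - S') = 0"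
    and transfer: "\<And>g. continuous_on UNIV g \<Longrightarrow> bounded (range g) \<Longrightarrow>
      (\<integral>p. g p \<partial>\<mu>') = (\<integral>p. g (T p) * h p \<partial>\<mu>)"
  defines "Tinv \<equiv> the_inv_into X T"
  shows "emeasure \<mu> (UNIV - Tinv ` S') = 0"
    and "fs_integral \<mu> c = fs_integral \<mu>' (\<lambda>q. c (Tinv q) / h (Tinv q))"
proof -
  have Tinv: "Tinv q \<in> X" "T (Tinv q) = q" if "q \<in> X'" for q
    unfolding Tinv_def
    by (rule bij_betw_apply[OF bij_betw_the_inv_into[OF T] that], rule f_the_inv_into_f_bij_betw[OF T that])
  have \<mu>'_S': "AE q in \<mu>'. q \<in> S'"
    using emeasure_Compl_eq_0_iff_AE[OF \<mu>'(1) finite_borel[OF S'(1)]] S'(3) by simp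
  have \<mu>_T_S': "AE p in \<mu>. T p \<in> S'"
  proof (rule AE_transfer_in_finite_support[OF \<mu>' S'(1) \<mu>'_S' _ transfer])
    show "AE p in \<mu>. 0 < h p"
      using \<mu>(3) by eventually_elim (use h in auto)
  qed
  have Tinv_T: "Tinv (T p) = p" if "p \<in> X" for p
    unfolding Tinv_def by (rule the_inv_into_f_f[OF bij_betw_imp_inj_on[OF T] that])
  from \<mu>_T_S' \<mu>(3) have \<mu>_S: "AE p in \<mu>. p \<in> Tinv ` S'"
    by eventually_elim (use Tinv_T in force)
  then show \<mu>_null: "emeasure \<mu> (UNIV - Tinv ` S') = 0"
    using emeasure_Compl_eq_0_iff_AE[OF \<mu>(1) finite_borel[OF finite_imageI[OF S'(1)]]] by simp
  have T_on_Tinv_S': "inj_on T (Tinv ` S')" "T ` Tinv ` S' \<subseteq> S'"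
    using inj_on_subset[OF bij_betw_imp_inj_on[OF T]] Tinv S'(2) by (auto simp: subset_eq)
  have atoms: "measure \<mu> {Tinv q} * h (Tinv q) = measure \<mu>' {q}" if "q \<in> S'" for q
  proof -
    have "measure \<mu> {Tinv q} * h (Tinv q) = measure \<mu>' {T (Tinv q)}"
      by (rule measure_atom_transfer[OF \<mu>(1,2) finite_imageI[OF S'(1)] \<mu>_S \<mu>'
            S'(1) \<mu>'_S' T_on_Tinv_S' _ imageI[OF that]])
        (rule transfer)
    then show ?thesis
      using Tinv(2) that S'(2) by (simp add: subset_eq)
  qed
  have "inj_on Tinv S'"
    using inj_on_subset[OF bij_betw_imp_inj_on[OF bij_betw_the_inv_into[OF T]] S'(2)]
    unfolding Tinv_def .
  then show "fs_integral \<mu> c = fs_integral \<mu>' (\<lambda>q. c (Tinv q) / h (Tinv q))"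
    by (rule fs_integral_reweight[OF \<mu>(1) \<mu>'(1) S'(1) _ \<mu>_null S'(3) atoms])
      (use h Tinv S'(2) in force)+
qed

lemma fs_integral_pullback:
  fixes T :: "real \<times> real \<Rightarrow> real \<times> real" and h c :: "real \<times> real \<Rightarrow> real"
  assumes T: "bij_betw T X X'" and h: "\<forall>p\<in>X. 0 < h p" and X: "X \<in> sets borel"
    and \<tau>: "bij_betw \<tau> (fin_measures X) (fin_measures X')"
    and transfer: "\<forall>\<alpha>\<in>fin_measures X. \<forall>g :: real \<times> real \<Rightarrow> real.
      continuous_on UNIV g \<and> bounded (range g) \<longrightarrow>
      (\<integral>p. g p \<partial>\<tau> \<alpha>) = (\<integral>p. g (T p) * h p \<partial>\<alpha>)"
    and \<mu>': "\<mu>' \<in> fin_measures X'"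
    and S': "finite S'" "S' \<subseteq> X'" "emeasure \<mu>' (UNIV - S') = 0"
  defines "\<mu> \<equiv> the_inv_into (fin_measures X) \<tau> \<mu>'" and "Tinv \<equiv> the_inv_into X T"
  shows "emeasure \<mu> (UNIV - Tinv ` S') = 0"
    and "fs_integral \<mu> c = fs_integral \<mu>' (\<lambda>q. c (Tinv q) / h (Tinv q))"
proof -
  have \<mu>_in: "\<mu> \<in> fin_measures X" and \<tau>\<mu>: "\<tau> \<mu> = \<mu>'"
    unfolding \<mu>_def
    by (rule bij_betw_apply[OF bij_betw_the_inv_into[OF \<tau>] \<mu>'], rule f_the_inv_into_f_bij_betw[OF \<tau> \<mu>'])
  have \<mu>_props: "sets \<mu> = sets borel" "finite_measure \<mu>" "emeasure \<mu> (UNIV - X) = 0"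
    and \<mu>'_props: "sets \<mu>' = sets borel" "finite_measure \<mu>'"
    using \<mu>_in \<mu>' by (auto simp: fin_measures_def)
  then have \<mu>: "sets \<mu> = sets borel" "finite_measure \<mu>" "AE p in \<mu>. p \<in> X"
    using emeasure_Compl_eq_0_iff_AE[OF \<mu>_props(1) X] by simp_all
  have "(\<integral>p. g p \<partial>\<mu>') = (\<integral>p. g (T p) * h p \<partial>\<mu>)"
    if "continuous_on UNIV g" "bounded (range g)" for g
    using transfer \<mu>_in that by (auto simp: \<tau>\<mu>[symmetric])
  note nonnull = fs_integral_transfer[OF T h \<mu> \<mu>'_props _ S' this, folded Tinv_def]
  \<comment> \<open>The transfer identity alone does not force \<open>\<mu> = 0\<close> here (\<open>h\<close> need not be \<open>\<mu>\<close>-integrable);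
    injectivity of \<open>\<tau>\<close> does.\<close>
  have null: "\<mu> = null_measure borel \<and> \<mu>' = null_measure borel" if "measure \<mu>' (space \<mu>') = 0"
  proof -
    have "\<tau> (null_measure borel) = null_measure borel"
      using bij_betw_apply[OF \<tau> null_measure_in_fin_measures]
        transfer[rule_format, OF null_measure_in_fin_measures, of "\<lambda>_. 1"]
      by (intro null_measure_if_measure_space_eq_0) (auto simp: fin_measures_def)
    moreover have "\<mu>' = null_measure borel"
      using that \<mu>'_props by (intro null_measure_if_measure_space_eq_0)
    ultimately show ?thesis
      using the_inv_into_f_f[OF bij_betw_imp_inj_on[OF \<tau>] null_measure_in_fin_measures]
      unfolding \<mu>_def by simp
  qed
  have "emeasure \<mu> (UNIV - Tinv ` S') = 0 \<and>
    fs_integral \<mu> c = fs_integral \<mu>' (\<lambda>q. c (Tinv q) / h (Tinv q))"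
  proof (cases "measure \<mu>' (space \<mu>') = 0")
    case True
    then show ?thesis
      using null[OF True] by (simp add: fs_integral_def)
  qed (use nonnull in blast)
  then show "emeasure \<mu> (UNIV - Tinv ` S') = 0"
    and "fs_integral \<mu> c = fs_integral \<mu>' (\<lambda>q. c (Tinv q) / h (Tinv q))"
    by blast+
qed

lemma the_inv_into_image_image: "inj_on f A \<Longrightarrow> B \<subseteq> A \<Longrightarrow> the_inv_into A f ` f ` B = B"
  by (simp add: image_image subset_eq the_inv_into_f_f cong: image_cong)

lemma emeasure_vimage_Compl_image_eq_0:
  fixes f :: "'a::t1_space \<Rightarrow> 'b::t1_space"
  assumes \<alpha>: "sets \<alpha> = sets borel" and \<beta>: "sets \<beta> = sets borel"
    and distr: "distr \<alpha> borel f = distr \<beta> borel f" and f: "f \<in> borel_measurable borel"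
    and S: "finite S" "emeasure \<alpha> (UNIV - S) = 0"
  shows "emeasure \<beta> (f -` (UNIV - f ` S)) = 0"
proof -
  have "f \<in> measurable \<alpha> borel" "f \<in> measurable \<beta> borel"
    using f by (simp_all add: measurable_cong_sets[OF \<alpha> refl] measurable_cong_sets[OF \<beta> refl])
  moreover have "UNIV - f ` S \<in> sets borel"
    using S(1) by (simp add: finite_borel)
  ultimately have "emeasure \<beta> (f -` (UNIV - f ` S)) = emeasure \<alpha> (f -` (UNIV - f ` S))"
    using emeasure_distr distr
    by (metis space_eq_UNIV_if_sets_borel[OF \<alpha>] space_eq_UNIV_if_sets_borel[OF \<beta>] Int_UNIV_right)
  also have "\<dots> \<le> emeasure \<alpha> (UNIV - S)"
  proof (rule emeasure_mono)
    show "UNIV - S \<in> sets \<alpha>"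
      using \<alpha> S(1) by (simp add: finite_borel)
  qed blast
  finally show ?thesis
    using S(2) by simp
qed

lemma competitor_finite_support:
  assumes comp: "competitors \<alpha> \<beta>" and S: "finite S" "emeasure \<alpha> (UNIV - S) = 0"
  shows "emeasure \<beta> (UNIV - fst ` S \<times> snd ` S) = 0"
proof -
  have \<beta>: "sets \<beta> = sets borel"
    using comp by (simp add: competitors_def)
  have "(fst :: real \<times> real \<Rightarrow> real) \<in> borel_measurable borel"
    and "(snd :: real \<times> real \<Rightarrow> real) \<in> borel_measurable borel"
    by (intro borel_measurable_continuous_onI continuous_intros)+
  then have "emeasure \<beta> (fst -` (UNIV - fst ` S)) = 0"
    and "emeasure \<beta> (snd -` (UNIV - snd ` S)) = 0"
    using comp S unfolding competitors_def marg0_def marg1_def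
    by (blast intro: emeasure_vimage_Compl_image_eq_0)+
  moreover have "fst -` (UNIV - fst ` S) \<in> sets \<beta>" "snd -` (UNIV - snd ` S) \<in> sets \<beta>"
    using measurable_sets_borel[OF \<open>fst \<in> borel_measurable borel\<close>]
      measurable_sets_borel[OF \<open>snd \<in> borel_measurable borel\<close>] \<beta> S(1)
    by (simp_all add: finite_borel)
  moreover have "UNIV - fst ` S \<times> snd ` S \<subseteq> fst -` (UNIV - fst ` S) \<union> snd -` (UNIV - snd ` S)"
    by auto
  ultimately show ?thesis
    using emeasure_subadditive[of "fst -` (UNIV - fst ` S)" \<beta> "snd -` (UNIV - snd ` S)"]
      emeasure_mono[of "UNIV - fst ` S \<times> snd ` S" "fst -` (UNIV - fst ` S) \<union> snd -` (UNIV - snd ` S)" \<beta>]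
    by simp
qed

lemma competitor_finite_support_in_product:
  assumes "competitors \<alpha> \<beta>" "finite S" "S \<subseteq> A \<times> B" "emeasure \<alpha> (UNIV - S) = 0"
  obtains F where "finite F" "F \<subseteq> A \<times> B" "emeasure \<beta> (UNIV - F) = 0"
proof
  show "finite (fst ` S \<times> snd ` S)" "emeasure \<beta> (UNIV - fst ` S \<times> snd ` S) = 0"
    using assms competitor_finite_support by auto
  show "fst ` S \<times> snd ` S \<subseteq> A \<times> B"
    using assms(3) by fastforce
qed

lemma c_monotone_image:
  fixes T :: "real \<times> real \<Rightarrow> real \<times> real" and h c :: "real \<times> real \<Rightarrow> real"
  assumes T: "bij_betw T X (A \<times> B)" and h: "\<forall>p\<in>X. 0 < h p" and X: "X \<in> sets borel"
    and \<tau>: "bij_betw \<tau> (fin_measures X) (fin_measures (A \<times> B))"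
    and transfer: "\<forall>\<alpha>\<in>fin_measures X. \<forall>g :: real \<times> real \<Rightarrow> real.
      continuous_on UNIV g \<and> bounded (range g) \<longrightarrow> (\<integral>p. g p \<partial>\<tau> \<alpha>) = (\<integral>p. g (T p) * h p \<partial>\<alpha>)"
    and preserving: "competitor_preserving \<tau> X (A \<times> B)"
    and \<Xi>: "\<Xi> \<subseteq> X" "c_monotone c \<Xi>"
  shows "c_monotone (\<lambda>q. c (the_inv_into X T q) / h (the_inv_into X T q)) (T ` \<Xi>)"
  unfolding c_monotone_def
proof (intro allI impI, elim conjE exE)
  fix \<alpha>' \<beta>' S'
  assume \<alpha>': "sets \<alpha>' = sets borel" "finite_measure \<alpha>'"
    and S': "finite S'" "S' \<subseteq> T ` \<Xi>" "emeasure \<alpha>' (UNIV - S') = 0"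
    and comp: "competitors \<alpha>' \<beta>'"
  have S'_AB: "S' \<subseteq> A \<times> B"
    using S'(2) \<Xi>(1) bij_betw_imp_surj_on[OF T] by auto
  obtain F where F: "finite F" "F \<subseteq> A \<times> B" "emeasure \<beta>' (UNIV - F) = 0"
    using competitor_finite_support_in_product[OF comp S'(1) S'_AB S'(3)] .
  have \<alpha>'_in: "\<alpha>' \<in> fin_measures (A \<times> B)"
    by (rule fin_measures_if_finite_support[OF \<alpha>' S'(1) S'_AB S'(3)])
  have \<beta>'_in: "\<beta>' \<in> fin_measures (A \<times> B)"
    using comp fin_measures_if_finite_support[OF _ _ F] by (simp add: competitors_def)
  define \<alpha> \<beta> where "\<alpha> = the_inv_into (fin_measures X) \<tau> \<alpha>'"
    and "\<beta> = the_inv_into (fin_measures X) \<tau> \<beta>'"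
  note pullback\<alpha> = fs_integral_pullback[OF T h X \<tau> transfer \<alpha>'_in S'(1) S'_AB S'(3), folded \<alpha>_def]
  note pullback\<beta> = fs_integral_pullback[OF T h X \<tau> transfer \<beta>'_in F, folded \<beta>_def]
  have "competitors \<alpha> \<beta>"
    using preserving \<alpha>'_in \<beta>'_in comp unfolding competitor_preserving_def \<alpha>_def \<beta>_def by blast
  moreover have "\<alpha> \<in> fin_measures X"
    unfolding \<alpha>_def by (rule bij_betw_apply[OF bij_betw_the_inv_into[OF \<tau>] \<alpha>'_in])
  moreover have "the_inv_into X T ` S' \<subseteq> \<Xi>"
    using image_mono[OF S'(2), of "the_inv_into X T"]
      the_inv_into_image_image[OF bij_betw_imp_inj_on[OF T] \<Xi>(1)]
    by simp
  ultimately have "fs_integral \<alpha> c \<le> fs_integral \<beta> c"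
    using \<Xi>(2) S'(1) pullback\<alpha>(1) unfolding c_monotone_def fin_measures_def by blast
  then show "fs_integral \<alpha>' (\<lambda>q. c (the_inv_into X T q) / h (the_inv_into X T q))
      \<le> fs_integral \<beta>' (\<lambda>q. c (the_inv_into X T q) / h (the_inv_into X T q))"
    using pullback\<alpha>(2) pullback\<beta>(2) by simp
qed

theorem proposition4p9:
  fixes I J I' J' :: "real set" and T :: "real \<times> real \<Rightarrow> real \<times> real"
    and h c :: "real \<times> real \<Rightarrow> real" and \<Xi> :: "(real \<times> real) set"
  assumes "is_interval I" "is_interval J" "is_interval I'" "is_interval J'"
    and "monotonicity_preserving I J I' J' T h"
    and "\<Xi> \<subseteq> I \<times> J"
    and "c_monotone c \<Xi>"
  shows "c_monotone
           (\<lambda>p'. c (the_inv_into (I \<times> J) T p') / h (the_inv_into (I \<times> J) T p'))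
           (T ` \<Xi>)"
proof -
  have "I \<times> J \<in> sets borel"
    using assms(1,2) by (intro borel_Times real_interval_borel_measurable)
  with assms(5-7) show ?thesis
    unfolding monotonicity_preserving_def by (blast intro: c_monotone_image)
qed

end
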